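(* Let $m\ge2$. For $p=1,\dots,m$ let $C^p=\bigoplus_{i=1}^sC^p_i$ be an orthogonal direct sum of finite-dimensional Hilbert spaces and $A^p\in\mathcal{L}(C^p)$ positive definite. Let $f_p\in\mathcal{H}_{A^p}\setminus\{0\}$, $p=1,\dots,m$. Then the simple tensor $f_1\otimes\cdots\otimes f_m\in\bigotimes_p\mathcal{H}_{A^p}$ is extremal if and only if there exists $i\in\{1,\dots,s\}$ such that $f_p\in A^p(C^p_i)$ for every $p=1,\dots,m$.
   Context: $\mathcal{H}_{A^p}$ is $C^p$ with inner product $\langle x,y\rangle=\langle (A^p)^{-1}x,y\rangle_{C^p}$. $\bigotimes_p\mathcal{H}_{A^p}$ is the Hilbert tensor product. Let $\phi^*:\bigotimes_p\mathcal{H}_{A^p}\to\bigoplus_{i=1}^sC^1_i\otimes\cdots\otimes C^m_i$ be the linear map with $\phi^*(f_1\otimes\cdots\otimes f_m)=(f_1(i)\otimes\cdots\otimes f_m(i))_{i=1}^s$, where $f(i)$ denotes the $C^p_i$-component of $f\in C^p$. Equip the range of $\phi^*$ with the range norm $\|\phi^*F\|=\inf\{\|G\|:\phi^*G=\phi^*F\}$ (this is the Hadamard product RKHS). An element $F$ is called extremal (for $m\ge2$) if $\|\phi^*F\|=\|F\|_{\bigotimes_p\mathcal{H}_{A^p}}$, equivalently $F\in(\ker\phi^* )^\perp$. *)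

theory Defs
  imports "HOL-Analysis.Analysis"
begin

(* C^p = complex^{d p}, coordinates 0..<d p; coordinate k belongs to block blk p k in {1..s};
   C^p_i = vectors supported on the coordinates of block i (orthogonal direct sum).
   Operators on C^p are matrices nat => nat => complex on {0..<d p}. *)

definition pos_def :: "nat \<Rightarrow> (nat \<Rightarrow> nat \<Rightarrow> complex) \<Rightarrow> bool" where
  "pos_def d A \<longleftrightarrow> (\<forall>k<d. \<forall>l<d. A l k = cnj (A k l)) \<and>
     (\<forall>x. (\<exists>k<d. x k \<noteq> 0) \<longrightarrow> Re (\<Sum>k<d. \<Sum>l<d. cnj (x k) * A k l * x l) > 0)"

definition is_inv :: "nat \<Rightarrow> (nat \<Rightarrow> nat \<Rightarrow> complex) \<Rightarrow> (nat \<Rightarrow> nat \<Rightarrow> complex) \<Rightarrow> bool" where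
  "is_inv d A B \<longleftrightarrow>
     (\<forall>k<d. \<forall>l<d. (\<Sum>r<d. A k r * B r l) = (if k = l then 1 else 0)) \<and>
     (\<forall>k<d. \<forall>l<d. (\<Sum>r<d. B k r * A r l) = (if k = l then 1 else 0))"

definition minv :: "nat \<Rightarrow> (nat \<Rightarrow> nat \<Rightarrow> complex) \<Rightarrow> (nat \<Rightarrow> nat \<Rightarrow> complex)" where
  "minv d A = (SOME B. is_inv d A B)"

(* index set of the tensor product: multi-indices (j_0,...,j_{m-1}) *)
definition tidx :: "nat \<Rightarrow> (nat \<Rightarrow> nat) \<Rightarrow> nat list set" where
  "tidx m d = {js. length js = m \<and> (\<forall>p<m. js ! p < d p)}"

(* inner product of the Hilbert tensor product of the H_{A^p}:
   <F,G> = < ((A^0)^{-1} (x) ... (x) (A^{m-1})^{-1}) F, G > *)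
definition tinner :: "nat \<Rightarrow> (nat \<Rightarrow> nat) \<Rightarrow> (nat \<Rightarrow> nat \<Rightarrow> nat \<Rightarrow> complex)
      \<Rightarrow> (nat list \<Rightarrow> complex) \<Rightarrow> (nat list \<Rightarrow> complex) \<Rightarrow> complex" where
  "tinner m d A F G = (\<Sum>j\<in>tidx m d. \<Sum>k\<in>tidx m d.
      (\<Prod>p<m. minv (d p) (A p) (j ! p) (k ! p)) * F k * cnj (G j))"

definition stensor :: "nat \<Rightarrow> (nat \<Rightarrow> nat \<Rightarrow> complex) \<Rightarrow> nat list \<Rightarrow> complex" where
  "stensor m f js = (\<Prod>p<m. f p (js ! p))"

definition phi_star :: "nat \<Rightarrow> (nat \<Rightarrow> nat) \<Rightarrow> (nat \<Rightarrow> nat \<Rightarrow> nat)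
      \<Rightarrow> (nat list \<Rightarrow> complex) \<Rightarrow> nat \<Rightarrow> nat list \<Rightarrow> complex" where
  "phi_star m d blk F i js = (if js \<in> tidx m d \<and> (\<forall>p<m. blk p (js ! p) = i) then F js else 0)"

definition extremal :: "nat \<Rightarrow> (nat \<Rightarrow> nat) \<Rightarrow> (nat \<Rightarrow> nat \<Rightarrow> nat) \<Rightarrow> nat
      \<Rightarrow> (nat \<Rightarrow> nat \<Rightarrow> nat \<Rightarrow> complex) \<Rightarrow> (nat list \<Rightarrow> complex) \<Rightarrow> bool" where
  "extremal m d blk s A F \<longleftrightarrow>
     (\<forall>G. (\<forall>i\<in>{1..s}. \<forall>js. phi_star m d blk G i js = 0) \<longrightarrow> tinner m d A F G = 0)"

definition in_image_block :: "nat \<Rightarrow> (nat \<Rightarrow> nat \<Rightarrow> complex) \<Rightarrow> (nat \<Rightarrow> nat) \<Rightarrow> nat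
      \<Rightarrow> (nat \<Rightarrow> complex) \<Rightarrow> bool" where
  "in_image_block d A b i f \<longleftrightarrow>
     (\<exists>u. (\<forall>k<d. b k \<noteq> i \<longrightarrow> u k = 0) \<and> (\<forall>k<d. f k = (\<Sum>l<d. A k l * u l)))"

end

theory Submission
  imports Defs "Jordan_Normal_Form.Determinant"
begin

text \<open>Put \<open>u\<^sub>p = (A\<^sup>p)\<^sup>-\<^sup>1 f\<^sub>p\<close>. The inner product of \<open>f\<^sub>1 \<otimes> \<dots> \<otimes> f\<^sub>m\<close> with \<open>G\<close> is the
  Euclidean pairing of \<open>u\<^sub>1 \<otimes> \<dots> \<otimes> u\<^sub>m\<close> with \<open>G\<close>, and the kernel of \<open>\<phi>\<^sup>*\<close> consists of the
  tensors vanishing on the diagonal blocks \<open>C\<^sup>1\<^sub>i \<otimes> \<dots> \<otimes> C\<^sup>m\<^sub>i\<close>. Hence the simple tensor is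
  extremal iff \<open>u\<^sub>1 \<otimes> \<dots> \<otimes> u\<^sub>m\<close> is supported on the diagonal blocks. Since all \<open>u\<^sub>p \<noteq> 0\<close> and
  \<open>m \<ge> 2\<close>, this happens iff all \<open>u\<^sub>p\<close> are supported in one common block \<open>C\<^sup>p\<^sub>i\<close>, i.e.
  \<open>f\<^sub>p \<in> A\<^sup>p(C\<^sup>p\<^sub>i)\<close>: changing a single coordinate of a multi-index in the support moves
  only one of its \<open>m\<close> block labels, so the others pin down the block.\<close>

definition mvec :: "nat \<Rightarrow> (nat \<Rightarrow> nat \<Rightarrow> complex) \<Rightarrow> (nat \<Rightarrow> complex) \<Rightarrow> nat \<Rightarrow> complex" where
  "mvec d M x k = (\<Sum>l<d. M k l * x l)"

definition on_diagonal_block :: "nat \<Rightarrow> (nat \<Rightarrow> nat \<Rightarrow> nat) \<Rightarrow> nat \<Rightarrow> nat list \<Rightarrow> bool" where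
  "on_diagonal_block m blk s js \<longleftrightarrow> (\<exists>i\<in>{1..s}. \<forall>p<m. blk p (js ! p) = i)"

definition tensor_inv_apply :: "nat \<Rightarrow> (nat \<Rightarrow> nat) \<Rightarrow> (nat \<Rightarrow> nat \<Rightarrow> nat \<Rightarrow> complex)
      \<Rightarrow> (nat list \<Rightarrow> complex) \<Rightarrow> nat list \<Rightarrow> complex" where
  "tensor_inv_apply m d A F j =
     (\<Sum>k\<in>tidx m d. (\<Prod>p<m. minv (d p) (A p) (j ! p) (k ! p)) * F k)"

lemma pos_def_imp_is_inv:
  assumes "pos_def d A"
  shows "is_inv d A (minv d A)"
proof -
  define M where "M = mat d d (\<lambda>(i,j). A i j)"
  have M: "M \<in> carrier_mat d d" unfolding M_def by simp
  have "det M \<noteq> 0"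
  proof
    assume "det M = 0"
    then obtain v where v: "v \<in> carrier_vec d" "v \<noteq> 0\<^sub>v d" "M *\<^sub>v v = 0\<^sub>v d"
      using det_0_iff_vec_prod_zero[OF M] by auto
    define x where "x k = (if k < d then vec_index v k else 0)" for k
    have "\<exists>k<d. x k \<noteq> 0"
    proof (rule ccontr)
      assume "\<not> ?thesis"
      hence "v = 0\<^sub>v d" using v(1) unfolding x_def by auto
      with v(2) show False by simp
    qed
    hence pos: "Re (\<Sum>k<d. \<Sum>l<d. cnj (x k) * A k l * x l) > 0"
      using assms unfolding pos_def_def by blast
    have "mvec d A x k = vec_index (M *\<^sub>v v) k" if "k < d" for k
      using that v(1) unfolding M_def x_def mvec_def
      by (auto simp: mult_mat_vec_def scalar_prod_def lessThan_atLeast0 intro!: sum.cong)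
    hence Ax: "mvec d A x k = 0" if "k < d" for k
      using v(3) that by simp
    have "(\<Sum>k<d. \<Sum>l<d. cnj (x k) * A k l * x l) = (\<Sum>k<d. cnj (x k) * mvec d A x k)"
      by (simp add: mvec_def sum_distrib_left mult.assoc)
    also have "\<dots> = 0" using Ax by simp
    finally show False using pos by simp
  qed
  from det_non_zero_imp_unit[OF M this, of "()"]
  obtain N where N: "N \<in> carrier_mat d d" "N * M = 1\<^sub>m d" "M * N = 1\<^sub>m d"
    unfolding Units_def ring_mat_def by auto
  have "is_inv d A (\<lambda>k l. N $$ (k,l))"
    unfolding is_inv_def
  proof (intro conjI allI impI)
    fix k l assume kl: "k < d" "l < d"
    have "(M * N) $$ (k,l) = (\<Sum>r<d. A k r * N $$ (r,l))"
      using kl N(1) unfolding M_def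
      by (auto simp: scalar_prod_def lessThan_atLeast0 intro!: sum.cong)
    thus "(\<Sum>r<d. A k r * N $$ (r,l)) = (if k = l then 1 else 0)" using N(3) kl by simp
    have "(N * M) $$ (k,l) = (\<Sum>r<d. N $$ (k,r) * A r l)"
      using kl N(1) unfolding M_def
      by (auto simp: scalar_prod_def lessThan_atLeast0 intro!: sum.cong)
    thus "(\<Sum>r<d. N $$ (k,r) * A r l) = (if k = l then 1 else 0)" using N(2) kl by simp
  qed
  thus ?thesis unfolding minv_def by (rule someI[where x = "\<lambda>k l. N $$ (k,l)"])
qed

lemma mvec_mvec_right_inverse:
  assumes "\<forall>k<d. \<forall>r<d. (\<Sum>l<d. M k l * N l r) = (if k = r then 1 else 0)" and "k < d"
  shows "mvec d M (mvec d N x) k = x k"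
proof -
  have "mvec d M (mvec d N x) k = (\<Sum>l<d. \<Sum>r<d. M k l * (N l r * x r))"
    unfolding mvec_def by (simp add: sum_distrib_left)
  also have "\<dots> = (\<Sum>r<d. \<Sum>l<d. M k l * (N l r * x r))"
    by (rule sum.swap)
  also have "\<dots> = (\<Sum>r<d. (\<Sum>l<d. M k l * N l r) * x r)"
    by (simp add: sum_distrib_right mult.assoc)
  also have "\<dots> = (\<Sum>r<d. if k = r then x r else 0)"
    using assms by (intro sum.cong) auto
  also have "\<dots> = x k" using assms(2) by simp
  finally show ?thesis .
qed

lemma is_inv_mvec_cancel:
  assumes "is_inv d A B" and "k < d"
  shows "mvec d A (mvec d B x) k = x k" and "mvec d B (mvec d A x) k = x k"
proof -
  have "\<forall>k<d. \<forall>r<d. (\<Sum>l<d. A k l * B l r) = (if k = r then 1 else 0)"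
       "\<forall>k<d. \<forall>r<d. (\<Sum>l<d. B k l * A l r) = (if k = r then 1 else 0)"
    using assms(1) unfolding is_inv_def by blast+
  thus "mvec d A (mvec d B x) k = x k" "mvec d B (mvec d A x) k = x k"
    using mvec_mvec_right_inverse assms(2) by blast+
qed

lemma is_inv_mvec_nonzero:
  assumes "is_inv d A B" and "\<exists>k<d. x k \<noteq> 0"
  shows "\<exists>k<d. mvec d B x k \<noteq> 0"
proof (rule ccontr)
  assume "\<not> ?thesis"
  hence "mvec d A (mvec d B x) k = 0" for k by (simp add: mvec_def)
  thus False using assms is_inv_mvec_cancel(1) by metis
qed

lemma in_image_block_iff_inverse_supported:
  assumes "is_inv d A B"
  shows "in_image_block d A b i f \<longleftrightarrow> (\<forall>k<d. b k \<noteq> i \<longrightarrow> mvec d B f k = 0)"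
  unfolding in_image_block_def mvec_def[symmetric]
proof
  assume "\<exists>v. (\<forall>k<d. b k \<noteq> i \<longrightarrow> v k = 0) \<and> (\<forall>k<d. f k = mvec d A v k)"
  then obtain v where supp: "\<forall>k<d. b k \<noteq> i \<longrightarrow> v k = 0" and f: "\<forall>k<d. f k = mvec d A v k"
    by blast
  have "mvec d B f k = v k" if "k < d" for k
  proof -
    have "mvec d B f k = mvec d B (mvec d A v) k"
      unfolding mvec_def[of d B] using f by (intro sum.cong refl) simp
    also have "\<dots> = v k" using is_inv_mvec_cancel(2)[OF assms that] .
    finally show ?thesis .
  qed
  with supp show "\<forall>k<d. b k \<noteq> i \<longrightarrow> mvec d B f k = 0" by simp
next
  assume "\<forall>k<d. b k \<noteq> i \<longrightarrow> mvec d B f k = 0"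
  moreover have "\<forall>k<d. f k = mvec d A (mvec d B f) k"
    using is_inv_mvec_cancel(1)[OF assms] by simp
  ultimately show "\<exists>v. (\<forall>k<d. b k \<noteq> i \<longrightarrow> v k = 0) \<and> (\<forall>k<d. f k = mvec d A v k)"
    by blast
qed

lemma tidx_0: "tidx 0 d = {[]}"
  unfolding tidx_def by auto

lemma tidx_Suc: "tidx (Suc m) d = (\<lambda>(xs,x). xs @ [x]) ` (tidx m d \<times> {..<d m})"
proof (rule equalityI; rule subsetI)
  fix js assume "js \<in> tidx (Suc m) d"
  hence js: "length js = Suc m" "\<forall>p<Suc m. js ! p < d p" unfolding tidx_def by auto
  then obtain xs x where e: "js = xs @ [x]" by (metis length_Suc_conv_rev)
  have "length xs = m" using js(1) e by simp
  moreover have "\<forall>p<m. xs ! p < d p" using js(2) e \<open>length xs = m\<close>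
    by (metis less_SucI nth_append_left)
  moreover have "x < d m" using js(2) e \<open>length xs = m\<close> by (metis lessI nth_append_length)
  ultimately show "js \<in> (\<lambda>(xs,x). xs @ [x]) ` (tidx m d \<times> {..<d m})"
    using e unfolding tidx_def by auto
next
  fix js assume "js \<in> (\<lambda>(xs,x). xs @ [x]) ` (tidx m d \<times> {..<d m})"
  then show "js \<in> tidx (Suc m) d"
    unfolding tidx_def by (auto simp: nth_append less_Suc_eq)
qed

lemma finite_tidx: "finite (tidx m d)"
  by (induction m) (simp_all add: tidx_0 tidx_Suc)

lemma sum_tidx_prod:
  "(\<Sum>k\<in>tidx m d. \<Prod>p<m. g p (k ! p)) = (\<Prod>p<m. \<Sum>l<d p. (g p l :: 'a :: comm_semiring_1))"
proof (induction m)
  case 0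
  show ?case by (simp add: tidx_0)
next
  case (Suc m)
  have inj: "inj_on (\<lambda>(xs,x). xs @ [x]) (tidx m d \<times> {..<d m})"
    by (auto simp: inj_on_def)
  have "(\<Sum>k\<in>tidx (Suc m) d. \<Prod>p<Suc m. g p (k ! p))
      = (\<Sum>(xs,x)\<in>tidx m d \<times> {..<d m}. \<Prod>p<Suc m. g p ((xs @ [x]) ! p))"
    unfolding tidx_Suc by (subst sum.reindex[OF inj]) (simp add: case_prod_unfold)
  also have "\<dots> = (\<Sum>(xs,x)\<in>tidx m d \<times> {..<d m}. (\<Prod>p<m. g p (xs ! p)) * g m x)"
  proof (rule sum.cong[OF refl])
    fix z assume "z \<in> tidx m d \<times> {..<d m}"
    then obtain xs x where z: "z = (xs,x)" "length xs = m" unfolding tidx_def by auto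
    have "(\<Prod>p<m. g p ((xs @ [x]) ! p)) = (\<Prod>p<m. g p (xs ! p))"
      by (rule prod.cong) (auto simp: nth_append z)
    thus "(case z of (xs,x) \<Rightarrow> \<Prod>p<Suc m. g p ((xs @ [x]) ! p)) =
          (case z of (xs,x) \<Rightarrow> (\<Prod>p<m. g p (xs ! p)) * g m x)"
      using z by (simp add: nth_append)
  qed
  also have "\<dots> = (\<Sum>xs\<in>tidx m d. \<Prod>p<m. g p (xs ! p)) * (\<Sum>x<d m. g m x)"
    by (simp add: sum_product sum.cartesian_product)
  finally show ?case using Suc.IH by simp
qed

lemma tinner_eq_tensor_inv_apply:
  "tinner m d A F G = (\<Sum>j\<in>tidx m d. tensor_inv_apply m d A F j * cnj (G j))"
  unfolding tinner_def tensor_inv_apply_def by (simp add: sum_distrib_right mult.assoc)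

lemma tensor_inv_apply_stensor:
  "tensor_inv_apply m d A (stensor m f) j = (\<Prod>p<m. mvec (d p) (minv (d p) (A p)) (f p) (j ! p))"
  unfolding tensor_inv_apply_def stensor_def mvec_def
  using sum_tidx_prod[where g = "\<lambda>p l. minv (d p) (A p) (j ! p) l * f p l"]
  by (simp add: prod.distrib)

lemma extremal_iff_supported_on_diagonal:
  "extremal m d blk s A F \<longleftrightarrow>
     (\<forall>j\<in>tidx m d. tensor_inv_apply m d A F j \<noteq> 0 \<longrightarrow> on_diagonal_block m blk s j)"
proof
  assume ext: "extremal m d blk s A F"
  show "\<forall>j\<in>tidx m d. tensor_inv_apply m d A F j \<noteq> 0 \<longrightarrow> on_diagonal_block m blk s j"
  proof (intro ballI impI; rule ccontr)
    fix j assume j: "j \<in> tidx m d" "tensor_inv_apply m d A F j \<noteq> 0"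
      "\<not> on_diagonal_block m blk s j"
    define G where "G k = (if k = j then 1 else (0::complex))" for k
    have "\<forall>i\<in>{1..s}. \<forall>js. phi_star m d blk G i js = 0"
      using j(3) unfolding phi_star_def G_def on_diagonal_block_def by auto
    hence "tinner m d A F G = 0" using ext unfolding extremal_def by blast
    moreover have "tinner m d A F G = (\<Sum>k\<in>tidx m d. if k = j then tensor_inv_apply m d A F k else 0)"
      unfolding tinner_eq_tensor_inv_apply G_def by (intro sum.cong) auto
    hence "tinner m d A F G = tensor_inv_apply m d A F j"
      using j(1) finite_tidx by simp
    ultimately show False using j(2) by simp
  qed
next
  assume supp: "\<forall>j\<in>tidx m d. tensor_inv_apply m d A F j \<noteq> 0 \<longrightarrow> on_diagonal_block m blk s j"
  show "extremal m d blk s A F" unfolding extremal_def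
  proof (intro allI impI)
    fix G assume ker: "\<forall>i\<in>{1..s}. \<forall>js. phi_star m d blk G i js = 0"
    have "G j = 0" if j: "j \<in> tidx m d" "on_diagonal_block m blk s j" for j
    proof -
      obtain i where i: "i \<in> {1..s}" "\<forall>p<m. blk p (j ! p) = i"
        using j(2) unfolding on_diagonal_block_def by blast
      have "phi_star m d blk G i j = G j" using j(1) i(2) unfolding phi_star_def by simp
      moreover have "phi_star m d blk G i j = 0" using ker i(1) by blast
      ultimately show ?thesis by simp
    qed
    hence "tensor_inv_apply m d A F j * cnj (G j) = 0" if "j \<in> tidx m d" for j
      using supp that by (cases "tensor_inv_apply m d A F j = 0") auto
    thus "tinner m d A F G = 0"
      unfolding tinner_eq_tensor_inv_apply by (rule sum.neutral[OF ballI])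
  qed
qed

lemma prod_supported_on_diagonal_imp_common_block:
  fixes u :: "nat \<Rightarrow> nat \<Rightarrow> 'a :: idom"
  assumes "m \<ge> 2" and nz: "\<forall>p<m. \<exists>k<d p. u p k \<noteq> 0"
    and supp: "\<forall>j\<in>tidx m d. (\<Prod>p<m. u p (j ! p)) \<noteq> 0 \<longrightarrow> on_diagonal_block m blk s j"
  shows "\<exists>i\<in>{1..s}. \<forall>p<m. \<forall>k<d p. blk p k \<noteq> i \<longrightarrow> u p k = 0"
proof -
  have block_of: "\<exists>i\<in>{1..s}. \<forall>p<m. blk p (j ! p) = i"
    if "j \<in> tidx m d" "\<forall>p<m. u p (j ! p) \<noteq> 0" for j
    using supp that unfolding on_diagonal_block_def by simp
  obtain w where w: "\<forall>p<m. w p < d p \<and> u p (w p) \<noteq> 0" using nz by metis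
  define j0 where "j0 = map w [0..<m]"
  have j0: "j0 \<in> tidx m d" "\<forall>p<m. j0 ! p = w p" using w unfolding j0_def tidx_def by auto
  then obtain i where i: "i \<in> {1..s}" "\<forall>p<m. blk p (w p) = i"
    using block_of[of j0] w by auto
  have "u p k = 0" if pk: "p < m" "k < d p" "blk p k \<noteq> i" for p k
  proof (rule ccontr)
    assume uk: "u p k \<noteq> 0"
    define j1 where "j1 = j0[p := k]"
    have j1: "j1 ! q = (if q = p then k else w q)" if "q < m" for q
      using j0 that pk unfolding j1_def tidx_def by auto
    have "length j1 = m" using j0(1) unfolding j1_def tidx_def by simp
    moreover have "\<forall>q<m. j1 ! q < d q" using j1 w pk(2) by simp
    ultimately have "j1 \<in> tidx m d" unfolding tidx_def by simp
    moreover have "\<forall>q<m. u q (j1 ! q) \<noteq> 0" using j1 w uk by simp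
    ultimately obtain i' where i': "\<forall>q<m. blk q (j1 ! q) = i'"
      using block_of by blast
    define q where "q = (if p = 0 then 1 else 0 :: nat)"
    have q: "q < m" "q \<noteq> p" using \<open>m \<ge> 2\<close> unfolding q_def by auto
    have "i' = i" using i'[rule_format, OF q(1)] j1[OF q(1)] q i(2) by simp
    thus False using i'[rule_format, OF pk(1)] j1[OF pk(1)] pk(3) by simp
  qed
  with i show ?thesis by blast
qed

lemma common_block_imp_prod_supported_on_diagonal:
  fixes u :: "nat \<Rightarrow> nat \<Rightarrow> 'a :: comm_semiring_1"
  assumes "i \<in> {1..s}" and "\<forall>p<m. \<forall>k<d p. blk p k \<noteq> i \<longrightarrow> u p k = 0"
  shows "\<forall>j\<in>tidx m d. (\<Prod>p<m. u p (j ! p)) \<noteq> 0 \<longrightarrow> on_diagonal_block m blk s j"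
proof (intro ballI impI)
  fix j assume j: "j \<in> tidx m d" "(\<Prod>p<m. u p (j ! p)) \<noteq> 0"
  have "blk p (j ! p) = i" if "p < m" for p
  proof (rule ccontr)
    assume "blk p (j ! p) \<noteq> i"
    hence "u p (j ! p) = 0" using assms(2) j(1) that unfolding tidx_def by blast
    hence "(\<Prod>p<m. u p (j ! p)) = 0" using that by (intro prod_zero) auto
    thus False using j(2) by contradiction
  qed
  thus "on_diagonal_block m blk s j" using assms(1) unfolding on_diagonal_block_def by blast
qed

theorem mainTheorem7:
  fixes m s :: nat and d :: "nat \<Rightarrow> nat" and blk :: "nat \<Rightarrow> nat \<Rightarrow> nat"
    and A :: "nat \<Rightarrow> nat \<Rightarrow> nat \<Rightarrow> complex" and f :: "nat \<Rightarrow> nat \<Rightarrow> complex"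
  assumes "m \<ge> 2"
    and "\<forall>p<m. \<forall>k<d p. blk p k \<in> {1..s}"
    and "\<forall>p<m. pos_def (d p) (A p)"
    and "\<forall>p<m. \<exists>k<d p. f p k \<noteq> 0"
  shows "extremal m d blk s A (stensor m f) \<longleftrightarrow>
         (\<exists>i\<in>{1..s}. \<forall>p<m. in_image_block (d p) (A p) (blk p) i (f p))"
proof -
  define u where "u p = mvec (d p) (minv (d p) (A p)) (f p)" for p
  have inv: "is_inv (d p) (A p) (minv (d p) (A p))" if "p < m" for p
    using pos_def_imp_is_inv assms(3) that by blast
  have u_nonzero: "\<forall>p<m. \<exists>k<d p. u p k \<noteq> 0"
    using is_inv_mvec_nonzero[OF inv] assms(4) unfolding u_def by blast
  have "extremal m d blk s A (stensor m f) \<longleftrightarrow>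
        (\<forall>j\<in>tidx m d. (\<Prod>p<m. u p (j ! p)) \<noteq> 0 \<longrightarrow> on_diagonal_block m blk s j)"
    unfolding extremal_iff_supported_on_diagonal tensor_inv_apply_stensor u_def ..
  also have "\<dots> \<longleftrightarrow> (\<exists>i\<in>{1..s}. \<forall>p<m. \<forall>k<d p. blk p k \<noteq> i \<longrightarrow> u p k = 0)"
    using prod_supported_on_diagonal_imp_common_block[OF assms(1) u_nonzero]
      common_block_imp_prod_supported_on_diagonal by blast
  also have "\<dots> \<longleftrightarrow> (\<exists>i\<in>{1..s}. \<forall>p<m. in_image_block (d p) (A p) (blk p) i (f p))"
    using in_image_block_iff_inverse_supported[OF inv] unfolding u_def by simp
  finally show ?thesis .
qed

end
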